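(* Let $G=(V,E)$ be an undirected, unweighted, connected graph on $N$ vertices and let $u\in V$. Then $$\min\{\mathsf{fp}_{r=1}^{\mathrm{dB}}(G,\{u\}),\ \mathsf{fp}_{r=1}^{\mathrm{Bd}}(G,\{u\})\}\le 1/N.$$
   Context: Mixed $\delta$-updating on a connected undirected unweighted graph: each vertex holds a mutant (fitness $r$) or wild-type (fitness $1$); $f_S(u)$ is the fitness at $u$ when $S$ is the mutant set. At each step, with probability $\delta$ a death-Birth step: choose $v$ uniformly to die, choose a neighbor $u$ of $v$ with probability proportional to $f_S(u)$, $u$ copies its type onto $v$; with probability $1-\delta$ a Birth-death step: choose $u$ with probability proportional to $f_S(u)$ among all vertices, choose a uniformly random neighbor $v$ of $u$, $u$ copies its type onto $v$. $\mathsf{fp}_r^\delta(G,S_0)$ is the probability all vertices eventually become mutant from initial mutant set $S_0$; $\delta=\mathrm{dB}$ means $\delta=1$ and $\delta=\mathrm{Bd}$ means $\delta=0$. *)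

theory Defs
  imports "HOL-Probability.Probability_Mass_Function"
begin

definition connected_graph :: "'a set \<Rightarrow> ('a \<Rightarrow> 'a \<Rightarrow> bool) \<Rightarrow> bool" where
  "connected_graph V E \<longleftrightarrow> finite V \<and> V \<noteq> {} \<and>
     (\<forall>x y. E x y \<longrightarrow> x \<in> V \<and> y \<in> V) \<and>
     (\<forall>x y. E x y \<longrightarrow> E y x) \<and> (\<forall>x. \<not> E x x) \<and>
     (\<forall>x\<in>V. \<forall>y\<in>V. E\<^sup>*\<^sup>* x y)"

definition nbrs :: "'a set \<Rightarrow> ('a \<Rightarrow> 'a \<Rightarrow> bool) \<Rightarrow> 'a \<Rightarrow> 'a set" where
  "nbrs V E v = {u \<in> V. E v u}"

definition fitness :: "real \<Rightarrow> 'a set \<Rightarrow> 'a \<Rightarrow> real" where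
  "fitness r S u = (if u \<in> S then r else 1)"

definition weighted_pmf :: "'a set \<Rightarrow> ('a \<Rightarrow> real) \<Rightarrow> 'a pmf" where
  "weighted_pmf A w = embed_pmf (\<lambda>x. if x \<in> A then w x / (\<Sum>y\<in>A. w y) else 0)"

definition copy_type :: "'a set \<Rightarrow> 'a \<Rightarrow> 'a \<Rightarrow> 'a set" where
  "copy_type S u v = (if u \<in> S then insert v S else S - {v})"

definition dB_step :: "'a set \<Rightarrow> ('a \<Rightarrow> 'a \<Rightarrow> bool) \<Rightarrow> real \<Rightarrow> 'a set \<Rightarrow> 'a set pmf" where
  "dB_step V E r S =
     bind_pmf (pmf_of_set V) (\<lambda>v.
     bind_pmf (weighted_pmf (nbrs V E v) (fitness r S)) (\<lambda>u.
     return_pmf (copy_type S u v)))"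

definition Bd_step :: "'a set \<Rightarrow> ('a \<Rightarrow> 'a \<Rightarrow> bool) \<Rightarrow> real \<Rightarrow> 'a set \<Rightarrow> 'a set pmf" where
  "Bd_step V E r S =
     bind_pmf (weighted_pmf V (fitness r S)) (\<lambda>u.
     bind_pmf (pmf_of_set (nbrs V E u)) (\<lambda>v.
     return_pmf (copy_type S u v)))"

text \<open>The homogeneous states {} and V are absorbing
(every copy event leaves them unchanged); this is made explicit so the kernel is
well defined also on the one-vertex graph, where no vertex has a neighbour.\<close>
definition mixed_step :: "real \<Rightarrow> 'a set \<Rightarrow> ('a \<Rightarrow> 'a \<Rightarrow> bool) \<Rightarrow> real \<Rightarrow> 'a set \<Rightarrow> 'a set pmf" where
  "mixed_step \<delta> V E r S =
     (if S = {} \<or> S = V then return_pmf S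
      else bind_pmf (bernoulli_pmf \<delta>) (\<lambda>b. if b then dB_step V E r S else Bd_step V E r S))"

definition state_dist :: "real \<Rightarrow> 'a set \<Rightarrow> ('a \<Rightarrow> 'a \<Rightarrow> bool) \<Rightarrow> real \<Rightarrow> 'a set \<Rightarrow> nat \<Rightarrow> 'a set pmf" where
  "state_dist \<delta> V E r S0 n = ((\<lambda>p. bind_pmf p (mixed_step \<delta> V E r)) ^^ n) (return_pmf S0)"

text \<open>Fixation probability: probability that eventually all vertices are mutant.
Since V is absorbing, the events "X_n = V" increase with n, so this equals
the supremum (= limit) over n of P(X_n = V).\<close>
definition fp :: "real \<Rightarrow> 'a set \<Rightarrow> ('a \<Rightarrow> 'a \<Rightarrow> bool) \<Rightarrow> real \<Rightarrow> 'a set \<Rightarrow> real" where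
  "fp \<delta> V E r S0 = (SUP n. pmf (state_dist \<delta> V E r S0 n) V)"

end

(*
  At neutral fitness both update rules pick a uniformly random vertex x and a uniformly
  random neighbour y of x; under death-Birth y replaces x, under Birth-death x replaces y.
  Summing the resulting expected change over ordered edges, contributions of (x, y) and
  (y, x) cancel for the weights w x = deg x (death-Birth) and w x = 1 / deg x
  (Birth-death), so the weight of the mutant set is a martingale. As the weight is
  nonnegative, w S0 = E w(X_n) >= w V * P(X_n = V), which bounds the two fixation
  probabilities from {u} by deg u / (SUM deg) and (1 / deg u) / (SUM 1/deg). Their product is
  at most 1 / N^2 by Cauchy-Schwarz, so the smaller one is at most 1 / N.
*)
theory Submission
  imports Defs "HOL-Analysis.Convex"
begin

definition mutant_weight :: "'a set \<Rightarrow> ('a \<Rightarrow> real) \<Rightarrow> 'a set \<Rightarrow> real" where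
  "mutant_weight V w S = sum w (V \<inter> S)"

lemma mutant_weight_nonneg: "(\<And>x. x \<in> V \<Longrightarrow> 0 \<le> w x) \<Longrightarrow> 0 \<le> mutant_weight V w S"
  unfolding mutant_weight_def by (intro sum_nonneg) auto

lemma mutant_weight_copy_type:
  assumes "finite V" "v \<in> V"
  shows "mutant_weight V w (copy_type S u v)
           = mutant_weight V w S + w v * (of_bool (u \<in> S) - of_bool (v \<in> S))"
proof (cases "u \<in> S")
  case True
  then have "V \<inter> copy_type S u v = insert v (V \<inter> S)"
    using assms(2) by (auto simp: copy_type_def)
  then show ?thesis
    using True assms by (cases "v \<in> S") (auto simp: mutant_weight_def insert_absorb)
next
  case False
  then have "V \<inter> copy_type S u v = V \<inter> S - {v}"
    by (auto simp: copy_type_def)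
  then show ?thesis
    using False assms by (auto simp: mutant_weight_def sum_diff1)
qed

lemma weighted_pmf_const_1:
  assumes "finite A" "A \<noteq> {}"
  shows "weighted_pmf A (\<lambda>_. 1) = pmf_of_set A"
proof -
  have "(\<lambda>x. if x \<in> A then 1 / (\<Sum>y\<in>A. 1) else 0) = pmf (pmf_of_set A)"
    using assms by (auto simp: fun_eq_iff)
  moreover have "embed_pmf (pmf p) = p" for p :: "'a pmf"
    by (rule type_definition.Rep_inverse[OF td_pmf_embed_pmf])
  ultimately show ?thesis
    unfolding weighted_pmf_def by metis
qed

lemma nn_integral_pmf_of_set_real:
  assumes "finite A" "A \<noteq> {}" "\<And>x. x \<in> A \<Longrightarrow> 0 \<le> f x"
  shows "(\<integral>\<^sup>+x. ennreal (f x) \<partial>pmf_of_set A) = ennreal (sum f A / card A)"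
  using assms by (simp add: nn_integral_pmf_of_set card_gt_0_iff ennreal_of_nat_eq_real_of_nat
      divide_ennreal sum_nonneg)

lemma sum_nbrs_swap:
  assumes "finite V" "\<And>x y. E x y \<Longrightarrow> E y x"
  shows "(\<Sum>x\<in>V. \<Sum>y\<in>nbrs V E x. f x y) = (\<Sum>x\<in>V. \<Sum>y\<in>nbrs V E x. f y x)"
proof -
  have "(\<Sum>x\<in>V. \<Sum>y\<in>nbrs V E x. f x y) = (\<Sum>y\<in>V. \<Sum>x\<in>{x\<in>V. E x y}. f x y)"
    unfolding nbrs_def by (rule sum.swap_restrict[OF assms(1) assms(1)])
  also have "\<dots> = (\<Sum>y\<in>V. \<Sum>x\<in>nbrs V E y. f x y)"
    unfolding nbrs_def using assms(2) by (intro sum.cong refl arg_cong[where f="\<lambda>A. sum _ A"]) blast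
  finally show ?thesis .
qed

lemma sum_nbrs_antisym_eq_0:
  fixes c :: "'a \<Rightarrow> 'a \<Rightarrow> real"
  assumes "finite V" "\<And>x y. E x y \<Longrightarrow> E y x" "\<And>x y. c x y = c y x"
  shows "(\<Sum>x\<in>V. \<Sum>y\<in>nbrs V E x. c x y * (g y - g x)) = 0"
proof -
  have "(\<Sum>x\<in>V. \<Sum>y\<in>nbrs V E x. c x y * (g y - g x)) = (\<Sum>x\<in>V. \<Sum>y\<in>nbrs V E x. c y x * (g x - g y))"
    using assms(1,2) by (rule sum_nbrs_swap)
  also have "\<dots> = - (\<Sum>x\<in>V. \<Sum>y\<in>nbrs V E x. c x y * (g y - g x))"
    by (simp add: sum_negf[symmetric] assms(3) algebra_simps)
  finally show ?thesis by simp
qed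

lemma fitness_neutral: "fitness 1 S = (\<lambda>_. 1)"
  by (simp add: fitness_def fun_eq_iff)

lemma bernoulli_pmf_1: "bernoulli_pmf 1 = return_pmf True"
  by (rule pmf_eqI) (simp add: pmf_return split: split_indicator)

lemma bernoulli_pmf_0: "bernoulli_pmf 0 = return_pmf False"
  by (rule pmf_eqI) (simp add: pmf_return split: split_indicator)

lemma mixed_step_1: "mixed_step 1 V E r S = (if S = {} \<or> S = V then return_pmf S else dB_step V E r S)"
  by (simp add: mixed_step_def bernoulli_pmf_1 bind_return_pmf)

lemma mixed_step_0: "mixed_step 0 V E r S = (if S = {} \<or> S = V then return_pmf S else Bd_step V E r S)"
  by (simp add: mixed_step_def bernoulli_pmf_0 bind_return_pmf)

lemma pmf_mult_le_nn_integral: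
  assumes "\<And>y. 0 \<le> f y"
  shows "ennreal (f x * pmf p x) \<le> (\<integral>\<^sup>+y. ennreal (f y) \<partial>p)"
proof -
  have "ennreal (f x * pmf p x) = (\<integral>\<^sup>+y. ennreal (f x) * indicator {x} y \<partial>p)"
    using assms by (simp add: emeasure_pmf_single ennreal_mult')
  also have "\<dots> \<le> (\<integral>\<^sup>+y. ennreal (f y) \<partial>p)"
    by (intro nn_integral_mono) (simp split: split_indicator)
  finally show ?thesis .
qed

lemma fp_le_of_martingale:
  assumes invariant: "\<And>S. (\<integral>\<^sup>+T. ennreal (f T) \<partial>mixed_step \<delta> V E r S) = ennreal (f S)"
    and nonneg: "\<And>S. 0 \<le> f S" and "0 < f V"
  shows "fp \<delta> V E r S0 \<le> f S0 / f V"
proof -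
  have expectation: "(\<integral>\<^sup>+T. ennreal (f T) \<partial>state_dist \<delta> V E r S0 n) = ennreal (f S0)" for n
    by (induction n) (simp_all add: state_dist_def nonneg invariant)
  have "ennreal (f V * pmf (state_dist \<delta> V E r S0 n) V) \<le> ennreal (f S0)" for n
    using pmf_mult_le_nn_integral[of f V "state_dist \<delta> V E r S0 n"] nonneg expectation
    by simp
  then have "f V * pmf (state_dist \<delta> V E r S0 n) V \<le> f S0" for n
    using nonneg by simp
  then have "pmf (state_dist \<delta> V E r S0 n) V \<le> f S0 / f V" for n
    using \<open>0 < f V\<close> by (simp add: field_simps)
  then show ?thesis
    unfolding fp_def by (intro cSUP_least) auto
qed

lemma fp_le_1: "fp \<delta> V E r S0 \<le> 1"
  unfolding fp_def by (intro cSUP_least) (auto simp: pmf_le_1)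

lemma card_squared_le_sum_mult_sum_inverse:
  fixes f :: "'a \<Rightarrow> real"
  assumes "\<And>x. x \<in> A \<Longrightarrow> 0 < f x"
  shows "real (card A) ^ 2 \<le> sum f A * (\<Sum>x\<in>A. 1 / f x)"
proof -
  have "(\<Sum>x\<in>A. sqrt (f x) * (1 / sqrt (f x))) = (\<Sum>x\<in>A. 1)"
    using assms by (intro sum.cong) (auto simp: less_imp_neq[symmetric])
  then have "real (card A) ^ 2 = (\<Sum>x\<in>A. sqrt (f x) * (1 / sqrt (f x))) ^ 2"
    by simp
  also have "\<dots> \<le> (\<Sum>x\<in>A. sqrt (f x) ^ 2) * (\<Sum>x\<in>A. (1 / sqrt (f x)) ^ 2)"
    by (rule Cauchy_Schwarz_ineq_sum)
  also have "\<dots> = sum f A * (\<Sum>x\<in>A. 1 / f x)"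
    using assms by (simp add: power_divide less_imp_le)
  finally show ?thesis .
qed

lemma min_le_of_mult_le_square:
  fixes x y a b c :: real
  assumes "x \<le> a" "y \<le> b" "0 < a" "0 < b" "0 \<le> c" "a * b \<le> c ^ 2"
  shows "min x y \<le> c"
proof (cases "a \<le> c")
  case False
  then have "a * b \<le> a * c"
    using assms by (smt (verit) mult_left_mono mult_right_mono power2_eq_square)
  then show ?thesis
    using assms by (simp add: min.coboundedI2)
qed (use assms in linarith)

locale nonisolated_graph =
  fixes V :: "'a set" and E :: "'a \<Rightarrow> 'a \<Rightarrow> bool"
  assumes finite_V: "finite V" and V_nonempty: "V \<noteq> {}"
    and sym: "E x y \<Longrightarrow> E y x"
    and nbrs_nonempty: "v \<in> V \<Longrightarrow> nbrs V E v \<noteq> {}"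
begin

definition degree :: "'a \<Rightarrow> real" where
  "degree v = real (card (nbrs V E v))"

lemma finite_nbrs: "finite (nbrs V E v)"
  using finite_V by (simp add: nbrs_def)

lemma degree_nonneg: "0 \<le> degree v"
  by (simp add: degree_def)

lemma degree_pos: "v \<in> V \<Longrightarrow> 0 < degree v"
  using finite_nbrs nbrs_nonempty by (simp add: degree_def card_gt_0_iff)

definition vertex_nbr_pmf :: "('a \<times> 'a) pmf" where
  "vertex_nbr_pmf =
     pmf_of_set V \<bind> (\<lambda>x. pmf_of_set (nbrs V E x) \<bind> (\<lambda>y. return_pmf (x, y)))"

lemma set_pmf_vertex_nbr_pmf: "(x, y) \<in> set_pmf vertex_nbr_pmf \<Longrightarrow> x \<in> V \<and> y \<in> nbrs V E x"
  using finite_V V_nonempty finite_nbrs nbrs_nonempty by (auto simp: vertex_nbr_pmf_def)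

lemma dB_step_neutral: "dB_step V E 1 S = map_pmf (\<lambda>(v, u). copy_type S u v) vertex_nbr_pmf"
  unfolding dB_step_def vertex_nbr_pmf_def fitness_neutral map_bind_pmf map_return_pmf
  using finite_V V_nonempty finite_nbrs nbrs_nonempty
  by (intro bind_pmf_cong refl) (simp_all add: weighted_pmf_const_1)

lemma Bd_step_neutral: "Bd_step V E 1 S = map_pmf (\<lambda>(u, v). copy_type S u v) vertex_nbr_pmf"
  unfolding Bd_step_def vertex_nbr_pmf_def fitness_neutral map_bind_pmf map_return_pmf
  using finite_V V_nonempty by (simp add: weighted_pmf_const_1)

lemma nn_integral_vertex_nbr_pmf:
  assumes "\<And>x y. x \<in> V \<Longrightarrow> y \<in> nbrs V E x \<Longrightarrow> 0 \<le> h x y"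
  shows "(\<integral>\<^sup>+(x, y). ennreal (h x y) \<partial>vertex_nbr_pmf)
           = ennreal ((\<Sum>x\<in>V. (\<Sum>y\<in>nbrs V E x. h x y) / degree x) / card V)"
proof -
  have "(\<integral>\<^sup>+(x, y). ennreal (h x y) \<partial>vertex_nbr_pmf)
          = (\<integral>\<^sup>+x. (\<integral>\<^sup>+y. ennreal (h x y) \<partial>pmf_of_set (nbrs V E x)) \<partial>pmf_of_set V)"
    by (simp add: vertex_nbr_pmf_def)
  also have "\<dots> = (\<integral>\<^sup>+x. ennreal ((\<Sum>y\<in>nbrs V E x. h x y) / degree x) \<partial>pmf_of_set V)"
    using finite_V V_nonempty finite_nbrs nbrs_nonempty assms
    by (intro nn_integral_cong_AE AE_pmfI) (simp add: nn_integral_pmf_of_set_real degree_def)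
  also have "\<dots> = ennreal ((\<Sum>x\<in>V. (\<Sum>y\<in>nbrs V E x. h x y) / degree x) / card V)"
    using finite_V V_nonempty assms
    by (intro nn_integral_pmf_of_set_real) (auto intro!: divide_nonneg_nonneg sum_nonneg simp: degree_def)
  finally show ?thesis .
qed

lemma nn_integral_vertex_nbr_pmf_antisym_drift:
  assumes "\<And>x y. c x y = c y x"
    and "\<And>x y. x \<in> V \<Longrightarrow> y \<in> nbrs V E x \<Longrightarrow> 0 \<le> F + degree x * c x y * (g y - g x)"
  shows "(\<integral>\<^sup>+(x, y). ennreal (F + degree x * c x y * (g y - g x)) \<partial>vertex_nbr_pmf) = ennreal F"
proof -
  have "(\<Sum>y\<in>nbrs V E x. F + degree x * c x y * (g y - g x))
          = degree x * (F + (\<Sum>y\<in>nbrs V E x. c x y * (g y - g x)))" for x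
    unfolding sum.distrib by (simp add: sum_distrib_left degree_def algebra_simps)
  then have "(\<Sum>y\<in>nbrs V E x. F + degree x * c x y * (g y - g x)) / degree x
          = F + (\<Sum>y\<in>nbrs V E x. c x y * (g y - g x))" if "x \<in> V" for x
    using degree_pos[OF that] by simp
  then have "(\<Sum>x\<in>V. (\<Sum>y\<in>nbrs V E x. F + degree x * c x y * (g y - g x)) / degree x)
               = card V * F + (\<Sum>x\<in>V. \<Sum>y\<in>nbrs V E x. c x y * (g y - g x))"
    by (simp add: sum.distrib)
  also have "\<dots> = card V * F"
    using finite_V sym assms(1) by (simp add: sum_nbrs_antisym_eq_0)
  finally show ?thesis
    using finite_V V_nonempty assms(2)
    by (simp add: nn_integral_vertex_nbr_pmf card_gt_0_iff)
qed

lemma nn_integral_dB_step_degree_weight: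
  "(\<integral>\<^sup>+T. ennreal (mutant_weight V degree T) \<partial>dB_step V E 1 S) = ennreal (mutant_weight V degree S)"
proof -
  let ?F = "mutant_weight V degree S"
  have copy: "mutant_weight V degree (copy_type S u v)
                = ?F + degree v * 1 * (of_bool (u \<in> S) - of_bool (v \<in> S))"
    if "v \<in> V" "u \<in> nbrs V E v" for v u
    using finite_V that by (simp add: mutant_weight_copy_type)
  have "(\<integral>\<^sup>+T. ennreal (mutant_weight V degree T) \<partial>dB_step V E 1 S)
          = (\<integral>\<^sup>+(v, u). ennreal (mutant_weight V degree (copy_type S u v)) \<partial>vertex_nbr_pmf)"
    by (simp add: dB_step_neutral case_prod_beta')
  also have "\<dots> = (\<integral>\<^sup>+(v, u). ennreal (?F + degree v * 1 * (of_bool (u \<in> S) - of_bool (v \<in> S)))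
                       \<partial>vertex_nbr_pmf)"
    using set_pmf_vertex_nbr_pmf copy by (intro nn_integral_cong_AE AE_pmfI) auto
  also have "\<dots> = ennreal ?F"
    using copy[symmetric] by (intro nn_integral_vertex_nbr_pmf_antisym_drift)
      (auto intro!: mutant_weight_nonneg simp: degree_nonneg)
  finally show ?thesis .
qed

lemma nn_integral_Bd_step_inverse_degree_weight:
  "(\<integral>\<^sup>+T. ennreal (mutant_weight V (\<lambda>v. 1 / degree v) T) \<partial>Bd_step V E 1 S)
     = ennreal (mutant_weight V (\<lambda>v. 1 / degree v) S)"
proof -
  let ?w = "\<lambda>v. 1 / degree v"
  let ?F = "mutant_weight V ?w S"
  \<comment> \<open>the symmetric coefficient is -1 / (deg u * deg v); the factor deg u is absorbed by
     the probability 1 / deg u of choosing v\<close>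
  have copy: "mutant_weight V ?w (copy_type S u v)
                = ?F + degree u * - (1 / (degree u * degree v)) * (of_bool (v \<in> S) - of_bool (u \<in> S))"
    if "u \<in> V" "v \<in> nbrs V E u" for u v
    using finite_V that degree_pos[of u] by (simp add: mutant_weight_copy_type nbrs_def field_simps)
  have "(\<integral>\<^sup>+T. ennreal (mutant_weight V ?w T) \<partial>Bd_step V E 1 S)
          = (\<integral>\<^sup>+(u, v). ennreal (mutant_weight V ?w (copy_type S u v)) \<partial>vertex_nbr_pmf)"
    by (simp add: Bd_step_neutral case_prod_beta')
  also have "\<dots> = (\<integral>\<^sup>+(u, v). ennreal (?F + degree u * - (1 / (degree u * degree v))
                                     * (of_bool (v \<in> S) - of_bool (u \<in> S))) \<partial>vertex_nbr_pmf)"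
    using set_pmf_vertex_nbr_pmf copy by (intro nn_integral_cong_AE AE_pmfI) auto
  also have "\<dots> = ennreal ?F"
    using copy[symmetric] by (intro nn_integral_vertex_nbr_pmf_antisym_drift)
      (auto intro!: mutant_weight_nonneg simp: degree_nonneg)
  finally show ?thesis .
qed

lemma fp_dB_neutral_le:
  assumes "u \<in> V"
  shows "fp 1 V E 1 {u} \<le> degree u / (\<Sum>v\<in>V. degree v)"
proof -
  have "fp 1 V E 1 {u} \<le> mutant_weight V degree {u} / mutant_weight V degree V"
  proof (rule fp_le_of_martingale)
    show "(\<integral>\<^sup>+T. ennreal (mutant_weight V degree T) \<partial>mixed_step 1 V E 1 S)
            = ennreal (mutant_weight V degree S)" for S
      by (simp add: mixed_step_1 nn_integral_dB_step_degree_weight mutant_weight_nonneg degree_nonneg)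
    show "0 \<le> mutant_weight V degree S" for S
      by (simp add: mutant_weight_nonneg degree_nonneg)
    show "0 < mutant_weight V degree V"
      using finite_V V_nonempty degree_pos by (simp add: mutant_weight_def sum_pos)
  qed
  then show ?thesis
    using assms by (simp add: mutant_weight_def)
qed

lemma fp_Bd_neutral_le:
  assumes "u \<in> V"
  shows "fp 0 V E 1 {u} \<le> (1 / degree u) / (\<Sum>v\<in>V. 1 / degree v)"
proof -
  let ?w = "\<lambda>v. 1 / degree v"
  have "fp 0 V E 1 {u} \<le> mutant_weight V ?w {u} / mutant_weight V ?w V"
  proof (rule fp_le_of_martingale)
    show "(\<integral>\<^sup>+T. ennreal (mutant_weight V ?w T) \<partial>mixed_step 0 V E 1 S)
            = ennreal (mutant_weight V ?w S)" for S
      by (simp add: mixed_step_0 nn_integral_Bd_step_inverse_degree_weight mutant_weight_nonneg degree_nonneg)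
    show "0 \<le> mutant_weight V ?w S" for S
      by (simp add: mutant_weight_nonneg degree_nonneg)
    show "0 < mutant_weight V ?w V"
      using finite_V V_nonempty degree_pos by (simp add: mutant_weight_def sum_pos)
  qed
  then show ?thesis
    using assms by (simp add: mutant_weight_def)
qed

end

lemma connected_graph_imp_nonisolated_graph:
  assumes "connected_graph V E" "card V \<noteq> 1"
  shows "nonisolated_graph V E"
proof
  show "finite V" "V \<noteq> {}" "E x y \<Longrightarrow> E y x" for x y
    using assms(1) by (auto simp: connected_graph_def)
  fix v assume "v \<in> V"
  have "V \<noteq> {v}"
    using assms(2) by auto
  then obtain w where "w \<in> V" "w \<noteq> v"
    using \<open>v \<in> V\<close> by blast
  then have "E\<^sup>*\<^sup>* v w"
    using assms(1) \<open>v \<in> V\<close> by (auto simp: connected_graph_def)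
  then obtain y where "E v y"
    using \<open>w \<noteq> v\<close> by (metis converse_rtranclpE)
  then show "nbrs V E v \<noteq> {}"
    using assms(1) unfolding connected_graph_def nbrs_def by blast
qed

theorem mainTheorem8:
  fixes V :: "'a set" and E :: "'a \<Rightarrow> 'a \<Rightarrow> bool" and u :: 'a
  assumes "connected_graph V E" and "u \<in> V"
  shows "min (fp 1 V E 1 {u}) (fp 0 V E 1 {u}) \<le> 1 / real (card V)"
proof (cases "card V = 1")
  case True
  then show ?thesis
    using fp_le_1[of 1 V E 1 "{u}"] by simp
next
  case False
  then interpret nonisolated_graph V E
    using assms(1) connected_graph_imp_nonisolated_graph by blast
  let ?D = "\<Sum>v\<in>V. degree v" and ?H = "\<Sum>v\<in>V. 1 / degree v"
  have "0 < ?D" "0 < ?H"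
    using finite_V V_nonempty degree_pos by (simp_all add: sum_pos)
  have "real (card V) ^ 2 \<le> ?D * ?H"
    using degree_pos by (rule card_squared_le_sum_mult_sum_inverse)
  then have product: "degree u / ?D * ((1 / degree u) / ?H) \<le> (1 / real (card V)) ^ 2"
    using \<open>0 < ?D\<close> \<open>0 < ?H\<close> degree_pos[OF assms(2)] finite_V V_nonempty
    by (simp add: power_divide card_gt_0_iff field_simps)
  show ?thesis
    by (rule min_le_of_mult_le_square[OF fp_dB_neutral_le fp_Bd_neutral_le _ _ _ product])
      (use assms(2) \<open>0 < ?D\<close> \<open>0 < ?H\<close> degree_pos in auto)
qed

end
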